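(* Let all notions be as in the context. If $(\Gamma,\mathsf{eval}\ e,[\,])\Longrightarrow^{*}(\Delta,\mathsf{eval}\ w,[\,])$, where $w$ is a weak head normal form, then $\Gamma;\emptyset;e\Downarrow\Delta;w$.
   Context: The language $\lambda_{\mathrm{PMC}}$ (in normalized form). Expressions: $e ::= x \mid e\,y \mid \lambda m \mid c(y_1,\ldots,y_n)$, where $x,y,y_i$ are variables, $c$ ranges over constructors, and application arguments and constructor arguments are variables. Matchings: $m ::= \mathsf{ret}(e) \mid \mathsf{fail} \mid p \Rightarrow m \mid y \triangleright m \mid m_1 \mid m_2 \mid (m\ \mathsf{where}\ \{x_1=e_1;\ldots;x_n=e_n\})$ (return expression, failure, pattern match, argument supply, alternative, local possibly recursive bindings). Patterns: $p ::= x \mid c(p_1,\ldots,p_n)$ (patterns may be nested). The matching $y_1 \triangleright p_1 \Rightarrow \cdots \Rightarrow y_n \triangleright p_n \Rightarrow m$ associates to the right: $y_1 \triangleright (p_1 \Rightarrow (y_2 \triangleright (\cdots (p_n \Rightarrow m)\cdots)))$. $m[y/x]$ denotes capture-avoiding substitution of $y$ for free occurrences of $x$. Arity: $\mathrm{ar}(\mathsf{ret}(e))=0$, $\mathrm{ar}(\mathsf{fail})=0$, $\mathrm{ar}(p\Rightarrow m)=1+\mathrm{ar}(m)$, $\mathrm{ar}(y\triangleright m)=\max(0,\mathrm{ar}(m)-1)$, $\mathrm{ar}(m_1\mid m_2)=\mathrm{ar}(m_1)$ if $\mathrm{ar}(m_1)=\mathrm{ar}(m_2)$ (undefined otherwise),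 $\mathrm{ar}(m\ \mathsf{where}\ b)=\mathrm{ar}(m)$. Weak head normal forms: $w ::= \lambda m$ with $\mathrm{ar}(m)>0$, or $c(y_1,\ldots,y_n)$. Matching results: $r ::= \mathsf{ret}(e) \mid \mathsf{fail}$. A heap $\Gamma,\Delta,\Theta$ is a finite map from variables to expressions; $\Gamma[y\mapsto e]$ maps $y$ to $e$ and otherwise agrees with $\Gamma$. An argument stack $A$ is a list of variables; for such a list define $[\,]\triangleright e = e$ and $(y:ys)\triangleright e = ys \triangleright (e\,y)$. $L$ is a set of variables. Big-step semantics: two mutually inductive judgments $\Gamma;L;e \Downarrow \Delta;w$ and $\Gamma;L;A;m \Downarrow_M \Delta;r$ defined by the rules: (Whnf) $\Gamma;L;w \Downarrow \Gamma;w$. (Sat) if $\mathrm{ar}(m)=0$, $\Gamma;L;[\,];m \Downarrow_M \Delta;\mathsf{ret}(e)$ and $\Delta;L;e\Downarrow\Theta;w$, then $\Gamma;L;\lambda m \Downarrow \Theta;w$. (Var) if $\Gamma;L\cup\{y\};e \Downarrow \Delta;w$ then $\Gamma[y\mapsto e];L;y \Downarrow \Delta[y\mapsto w];w$. (App) if $\Gamma;L;e\Downarrow\Delta;\lambda m$ and $\Delta;L;\lambda(y\triangleright m)\Downarrow\Theta;w$ then $\Gamma;L;(e\,y)\Downarrow\Theta;w$. (Return) $\Gamma;L;A;\mathsf{ret}(e)\Downarrow_M\Gamma;\mathsf{ret}(A\triangleright e)$. (Fail) $\Gamma;L;A;\mathsf{fail}\Downarrow_M\Gamma;\mathsf{fail}$.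 (Arg) if $\Gamma;L;(y:A);m\Downarrow_M\Delta;r$ then $\Gamma;L;A;y\triangleright m\Downarrow_M\Delta;r$. (Bind) if $\Gamma;L;A;m[y/x]\Downarrow_M\Delta;r$ then $\Gamma;L;(y:A);x\Rightarrow m\Downarrow_M\Delta;r$. (Cons1) if $\Gamma;L;y\Downarrow\Delta;c(y_1,\ldots,y_n)$ and $\Delta;L;A;y_1\triangleright p_1\Rightarrow\cdots\Rightarrow y_n\triangleright p_n\Rightarrow m\Downarrow_M\Theta;r$ then $\Gamma;L;(y:A);c(p_1,\ldots,p_n)\Rightarrow m\Downarrow_M\Theta;r$. (Cons2) if $\Gamma;L;y\Downarrow\Delta;c'(y_1,\ldots,y_k)$ with $c\neq c'$ then $\Gamma;L;(y:A);c(p_1,\ldots,p_n)\Rightarrow m\Downarrow_M\Delta;\mathsf{fail}$. (Alt1) if $\Gamma;L;A;m_1\Downarrow_M\Delta;\mathsf{ret}(e)$ then $\Gamma;L;A;(m_1\mid m_2)\Downarrow_M\Delta;\mathsf{ret}(e)$. (Alt2) if $\Gamma;L;A;m_1\Downarrow_M\Delta;\mathsf{fail}$ and $\Delta;L;A;m_2\Downarrow_M\Theta;r$ then $\Gamma;L;A;(m_1\mid m_2)\Downarrow_M\Theta;r$. (Where) if $\Gamma[y_i\mapsto\hat e_i];L;A;\hat m\Downarrow_M\Delta;r$ then $\Gamma;L;A;(m\ \mathsf{where}\ \{x_i=e_i\})\Downarrow_M\Delta;r$, where the $y_i$ are fresh (occur neither free nor bound in $\Gamma$, $L$, $A$, or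 $m$), $\hat e_i=e_i[y_1/x_1,\ldots,y_n/x_n]$ and $\hat m=m[y_1/x_1,\ldots,y_n/x_n]$. Abstract machine. Controls: $C ::= \mathsf{eval}\ e \mid \mathsf{match}\ A\ m$. Continuations: $k ::= y \mid\ !y \mid \$ \mid ?(A,m) \mid @(A, c(\vec p)\Rightarrow m)$. A return stack $S$ is a list of continuations. Configurations are triples $(\Gamma, C, S)$. Transitions $\Longrightarrow$: (App1) $(\Gamma,\mathsf{eval}\ (e\,y),S)\Longrightarrow(\Gamma,\mathsf{eval}\ e,y:S)$. (App2) $(\Gamma,\mathsf{eval}\ \lambda m,y:S)\Longrightarrow(\Gamma,\mathsf{eval}\ \lambda(y\triangleright m),S)$ if $\mathrm{ar}(m)>0$. (Sat) $(\Gamma,\mathsf{eval}\ \lambda m,S)\Longrightarrow(\Gamma,\mathsf{match}\ [\,]\ m,\$:S)$ if $\mathrm{ar}(m)=0$. (Var) $(\Gamma[y\mapsto e],\mathsf{eval}\ y,S)\Longrightarrow(\Gamma,\mathsf{eval}\ e,!y:S)$. (Update) $(\Gamma,\mathsf{eval}\ w,!y:S)\Longrightarrow(\Gamma[y\mapsto w],\mathsf{eval}\ w,S)$. (Return1A) $(\Gamma,\mathsf{match}\ A\ \mathsf{ret}(e),S)\Longrightarrow(\Gamma,\mathsf{match}\ [\,]\ \mathsf{ret}(A\triangleright e),S)$ if $A\neq[\,]$. (Return1B) $(\Gamma,\mathsf{match}\ [\,]\ \mathsf{ret}(e),\$:S)\Longrightarrow(\Gamma,\mathsf{eval}\ e,S)$.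 (Return2) $(\Gamma,\mathsf{match}\ [\,]\ \mathsf{ret}(e),?(A',m):S)\Longrightarrow(\Gamma,\mathsf{match}\ [\,]\ \mathsf{ret}(e),S)$. (Bind) $(\Gamma,\mathsf{match}\ (y:A)\ (x\Rightarrow m),S)\Longrightarrow(\Gamma,\mathsf{match}\ A\ m[y/x],S)$. (Cons1) $(\Gamma,\mathsf{match}\ (y:A)\ (c(\vec p)\Rightarrow m),S)\Longrightarrow(\Gamma,\mathsf{eval}\ y,@(A,c(\vec p)\Rightarrow m):S)$. (Cons2) $(\Gamma,\mathsf{eval}\ c(y_1,\ldots,y_n),@(A,c(p_1,\ldots,p_n)\Rightarrow m):S)\Longrightarrow(\Gamma,\mathsf{match}\ A\ (y_1\triangleright p_1\Rightarrow\cdots\Rightarrow y_n\triangleright p_n\Rightarrow m),S)$. (Fail) $(\Gamma,\mathsf{eval}\ c'(y_1,\ldots,y_k),@(A,c(p_1,\ldots,p_n)\Rightarrow m):S)\Longrightarrow(\Gamma,\mathsf{match}\ [\,]\ \mathsf{fail},S)$ if $c\neq c'$. (Arg) $(\Gamma,\mathsf{match}\ A\ (y\triangleright m),S)\Longrightarrow(\Gamma,\mathsf{match}\ (y:A)\ m,S)$. (Alt1) $(\Gamma,\mathsf{match}\ A\ (m_1\mid m_2),S)\Longrightarrow(\Gamma,\mathsf{match}\ A\ m_1,?(A,m_2):S)$. (Alt2) $(\Gamma,\mathsf{match}\ A'\ \mathsf{fail},?(A,m):S)\Longrightarrow(\Gamma,\mathsf{match}\ A\ m,S)$. (Where) $(\Gamma,\mathsf{match}\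 A\ (m\ \mathsf{where}\ \{x_i=e_i\}),S)\Longrightarrow(\Gamma[y_i\mapsto\hat e_i],\mathsf{match}\ A\ \hat m,S)$ with $y_i$ fresh, $\hat e_i=e_i[y_1/x_1,\ldots,y_n/x_n]$, $\hat m=m[y_1/x_1,\ldots,y_n/x_n]$. $\Longrightarrow^{*}$ is the reflexive–transitive closure of $\Longrightarrow$. *)

theory Defs
  imports Main
begin

type_synonym var = nat
type_synonym con = nat

datatype pat = PVar var | PCon con "pat list"

datatype expr =
    Var var
  | App expr var
  | Lam "match"
  | Con con "var list"
and match =
    Ret expr
  | Fail
  | Pat pat "match"
  | Arg var "match"
  | Alt "match" "match"
  | Where "match" "(var \<times> expr) list"

primrec pvars :: "pat \<Rightarrow> var list" where
  "pvars (PVar x) = [x]"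
| "pvars (PCon c ps) = concat (map pvars ps)"

primrec prn :: "(var \<Rightarrow> var) \<Rightarrow> pat \<Rightarrow> pat" where
  "prn \<rho> (PVar x) = PVar (\<rho> x)"
| "prn \<rho> (PCon c ps) = PCon c (map (prn \<rho>) ps)"

primrec fv_e :: "expr \<Rightarrow> var set" and fv_m :: "match \<Rightarrow> var set" where
  "fv_e (Var x) = {x}"
| "fv_e (App e y) = insert y (fv_e e)"
| "fv_e (Lam m) = fv_m m"
| "fv_e (Con c ys) = set ys"
| "fv_m (Ret e) = fv_e e"
| "fv_m Fail = {}"
| "fv_m (Pat p m) = fv_m m - set (pvars p)"
| "fv_m (Arg y m) = insert y (fv_m m)"
| "fv_m (Alt m1 m2) = fv_m m1 \<union> fv_m m2"
| "fv_m (Where m bs) = (fv_m m \<union> \<Union> (snd ` set (map (map_prod id fv_e) bs))) - set (map fst bs)"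

primrec av_e :: "expr \<Rightarrow> var set" and av_m :: "match \<Rightarrow> var set" where
  "av_e (Var x) = {x}"
| "av_e (App e y) = insert y (av_e e)"
| "av_e (Lam m) = av_m m"
| "av_e (Con c ys) = set ys"
| "av_m (Ret e) = av_e e"
| "av_m Fail = {}"
| "av_m (Pat p m) = av_m m \<union> set (pvars p)"
| "av_m (Arg y m) = insert y (av_m m)"
| "av_m (Alt m1 m2) = av_m m1 \<union> av_m m2"
| "av_m (Where m bs) = av_m m \<union> \<Union> (snd ` set (map (map_prod id av_e) bs)) \<union> set (map fst bs)"

definition fresh_var :: "var set \<Rightarrow> var" where
  "fresh_var A = (if A = {} then 0 else Suc (Max A))"

fun ren :: "var set \<Rightarrow> var list \<Rightarrow> var \<Rightarrow> var" where
  "ren A [] = id"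
| "ren A (b # bs) =
     (let b' = (if b \<in> A then fresh_var A else b) in (ren (insert b' A) bs)(b := b'))"

definition upd_binders :: "(var \<Rightarrow> var) \<Rightarrow> var list \<Rightarrow> (var \<Rightarrow> var) \<Rightarrow> var \<Rightarrow> var" where
  "upd_binders \<sigma> B \<rho> = (\<lambda>v. if v \<in> set B then \<rho> v else \<sigma> v)"

primrec se0 :: "expr \<Rightarrow> (var \<Rightarrow> var) \<Rightarrow> expr" and sm0 :: "match \<Rightarrow> (var \<Rightarrow> var) \<Rightarrow> match" where
  "se0 (Var x) = (\<lambda>\<sigma>. Var (\<sigma> x))"
| "se0 (App e y) = (\<lambda>\<sigma>. App (se0 e \<sigma>) (\<sigma> y))"
| "se0 (Lam m) = (\<lambda>\<sigma>. Lam (sm0 m \<sigma>))"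
| "se0 (Con c ys) = (\<lambda>\<sigma>. Con c (map \<sigma> ys))"
| "sm0 (Ret e) = (\<lambda>\<sigma>. Ret (se0 e \<sigma>))"
| "sm0 Fail = (\<lambda>\<sigma>. Fail)"
| "sm0 (Pat p m) = (\<lambda>\<sigma>.
     (let B = pvars p; \<rho> = ren (\<sigma> ` (fv_m m - set B)) B
      in Pat (prn \<rho> p) (sm0 m (upd_binders \<sigma> B \<rho>))))"
| "sm0 (Arg y m) = (\<lambda>\<sigma>. Arg (\<sigma> y) (sm0 m \<sigma>))"
| "sm0 (Alt m1 m2) = (\<lambda>\<sigma>. Alt (sm0 m1 \<sigma>) (sm0 m2 \<sigma>))"
| "sm0 (Where m bs) = (\<lambda>\<sigma>.
     (let B = map fst bs;
          \<rho> = ren (\<sigma> ` fv_m (Where m bs)) B;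
          \<sigma>' = upd_binders \<sigma> B \<rho>
      in Where (sm0 m \<sigma>') (map (\<lambda>(x, f). (\<rho> x, f \<sigma>')) (map (map_prod id se0) bs))))"

definition se :: "(var \<Rightarrow> var) \<Rightarrow> expr \<Rightarrow> expr" where "se \<sigma> e = se0 e \<sigma>"
definition sm :: "(var \<Rightarrow> var) \<Rightarrow> match \<Rightarrow> match" where "sm \<sigma> m = sm0 m \<sigma>"

definition subst1 :: "match \<Rightarrow> var \<Rightarrow> var \<Rightarrow> match" where
  "subst1 m y x = sm (id(x := y)) m"

definition substs :: "var list \<Rightarrow> var list \<Rightarrow> var \<Rightarrow> var" where
  "substs ys xs = (\<lambda>v. case map_of (zip xs ys) v of None \<Rightarrow> v | Some y \<Rightarrow> y)"

fun ar :: "match \<Rightarrow> nat option" where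
  "ar (Ret e) = Some 0"
| "ar Fail = Some 0"
| "ar (Pat p m) = map_option Suc (ar m)"
| "ar (Arg y m) = map_option (\<lambda>n. n - 1) (ar m)"
| "ar (Alt m1 m2) = (if ar m1 = ar m2 then ar m1 else None)"
| "ar (Where m bs) = ar m"

fun is_whnf :: "expr \<Rightarrow> bool" where
  "is_whnf (Lam m) = (\<exists>n. ar m = Some n \<and> n > 0)"
| "is_whnf (Con c ys) = True"
| "is_whnf _ = False"

definition apply_args :: "var list \<Rightarrow> expr \<Rightarrow> expr" where
  "apply_args A e = foldl App e A"

definition chain :: "var list \<Rightarrow> pat list \<Rightarrow> match \<Rightarrow> match" where
  "chain ys ps m = foldr (\<lambda>(y, p) m'. Arg y (Pat p m')) (zip ys ps) m"

type_synonym heap = "var \<Rightarrow> expr option"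

definition hvars :: "heap \<Rightarrow> var set" where
  "hvars \<Gamma> = dom \<Gamma> \<union> \<Union> (av_e ` ran \<Gamma>)"

inductive
  bs_eval :: "heap \<Rightarrow> var set \<Rightarrow> expr \<Rightarrow> heap \<Rightarrow> expr \<Rightarrow> bool" and
  bs_match :: "heap \<Rightarrow> var set \<Rightarrow> var list \<Rightarrow> match \<Rightarrow> heap \<Rightarrow> match \<Rightarrow> bool"
where
  Whnf: "is_whnf w \<Longrightarrow> bs_eval \<Gamma> L w \<Gamma> w"
| Sat: "ar m = Some 0 \<Longrightarrow> bs_match \<Gamma> L [] m \<Delta> (Ret e) \<Longrightarrow> bs_eval \<Delta> L e \<Theta> w
        \<Longrightarrow> bs_eval \<Gamma> L (Lam m) \<Theta> w"
| Var: "\<Gamma> y = Some e \<Longrightarrow> bs_eval (\<Gamma>(y := None)) (insert y L) e \<Delta> w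
        \<Longrightarrow> bs_eval \<Gamma> L (Var y) (\<Delta>(y \<mapsto> w)) w"
| App: "bs_eval \<Gamma> L e \<Delta> (Lam m) \<Longrightarrow> bs_eval \<Delta> L (Lam (Arg y m)) \<Theta> w
        \<Longrightarrow> bs_eval \<Gamma> L (App e y) \<Theta> w"
| Return: "bs_match \<Gamma> L A (Ret e) \<Gamma> (Ret (apply_args A e))"
| FailR: "bs_match \<Gamma> L A Fail \<Gamma> Fail"
| ArgR: "bs_match \<Gamma> L (y # A) m \<Delta> r \<Longrightarrow> bs_match \<Gamma> L A (Arg y m) \<Delta> r"
| Bind: "bs_match \<Gamma> L A (subst1 m y x) \<Delta> r \<Longrightarrow> bs_match \<Gamma> L (y # A) (Pat (PVar x) m) \<Delta> r"
| Cons1: "bs_eval \<Gamma> L (Var y) \<Delta> (Con c ys) \<Longrightarrow> length ys = length ps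
        \<Longrightarrow> bs_match \<Delta> L A (chain ys ps m) \<Theta> r
        \<Longrightarrow> bs_match \<Gamma> L (y # A) (Pat (PCon c ps) m) \<Theta> r"
| Cons2: "bs_eval \<Gamma> L (Var y) \<Delta> (Con c' ys) \<Longrightarrow> c \<noteq> c'
        \<Longrightarrow> bs_match \<Gamma> L (y # A) (Pat (PCon c ps) m) \<Delta> Fail"
| Alt1: "bs_match \<Gamma> L A m1 \<Delta> (Ret e) \<Longrightarrow> bs_match \<Gamma> L A (Alt m1 m2) \<Delta> (Ret e)"
| Alt2: "bs_match \<Gamma> L A m1 \<Delta> Fail \<Longrightarrow> bs_match \<Delta> L A m2 \<Theta> r
        \<Longrightarrow> bs_match \<Gamma> L A (Alt m1 m2) \<Theta> r"
| WhereR: "length ys = length bs \<Longrightarrow> distinct ys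
        \<Longrightarrow> set ys \<inter> (hvars \<Gamma> \<union> L \<union> set A \<union> av_m (Where m bs)) = {}
        \<Longrightarrow> bs_match (\<Gamma>(ys [\<mapsto>] map (\<lambda>b. se (substs ys (map fst bs)) (snd b)) bs)) L A
                     (sm (substs ys (map fst bs)) m) \<Delta> r
        \<Longrightarrow> bs_match \<Gamma> L A (Where m bs) \<Delta> r"

datatype control = Eval expr | Match "var list" "match"

datatype cont =
    KArg var
  | KUpd var
  | KRet
  | KAlt "var list" "match"
  | KPat "var list" con "pat list" "match"

type_synonym config = "heap \<times> control \<times> cont list"

fun cvars :: "control \<Rightarrow> var set" where
  "cvars (Eval e) = av_e e"
| "cvars (Match A m) = set A \<union> av_m m"

fun kvars :: "cont \<Rightarrow> var set" where
  "kvars (KArg y) = {y}"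
| "kvars (KUpd y) = {y}"
| "kvars KRet = {}"
| "kvars (KAlt A m) = set A \<union> av_m m"
| "kvars (KPat A c ps m) = set A \<union> av_m (Pat (PCon c ps) m)"

inductive step :: "config \<Rightarrow> config \<Rightarrow> bool" where
  App1: "step (\<Gamma>, Eval (App e y), S) (\<Gamma>, Eval e, KArg y # S)"
| App2: "ar m = Some n \<Longrightarrow> n > 0 \<Longrightarrow> step (\<Gamma>, Eval (Lam m), KArg y # S) (\<Gamma>, Eval (Lam (Arg y m)), S)"
| Sat: "ar m = Some 0 \<Longrightarrow> step (\<Gamma>, Eval (Lam m), S) (\<Gamma>, Match [] m, KRet # S)"
| Var: "\<Gamma> y = Some e \<Longrightarrow> step (\<Gamma>, Eval (Var y), S) (\<Gamma>(y := None), Eval e, KUpd y # S)"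
| Update: "is_whnf w \<Longrightarrow> step (\<Gamma>, Eval w, KUpd y # S) (\<Gamma>(y \<mapsto> w), Eval w, S)"
| Return1A: "A \<noteq> [] \<Longrightarrow> step (\<Gamma>, Match A (Ret e), S) (\<Gamma>, Match [] (Ret (apply_args A e)), S)"
| Return1B: "step (\<Gamma>, Match [] (Ret e), KRet # S) (\<Gamma>, Eval e, S)"
| Return2: "step (\<Gamma>, Match [] (Ret e), KAlt A' m # S) (\<Gamma>, Match [] (Ret e), S)"
| Bind: "step (\<Gamma>, Match (y # A) (Pat (PVar x) m), S) (\<Gamma>, Match A (subst1 m y x), S)"
| Cons1: "step (\<Gamma>, Match (y # A) (Pat (PCon c ps) m), S) (\<Gamma>, Eval (Var y), KPat A c ps m # S)"
| Cons2: "length ys = length ps \<Longrightarrow>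
          step (\<Gamma>, Eval (Con c ys), KPat A c ps m # S) (\<Gamma>, Match A (chain ys ps m), S)"
| FailK: "c \<noteq> c' \<Longrightarrow>
          step (\<Gamma>, Eval (Con c' ys), KPat A c ps m # S) (\<Gamma>, Match [] Fail, S)"
| ArgK: "step (\<Gamma>, Match A (Arg y m), S) (\<Gamma>, Match (y # A) m, S)"
| Alt1: "step (\<Gamma>, Match A (Alt m1 m2), S) (\<Gamma>, Match A m1, KAlt A m2 # S)"
| Alt2: "step (\<Gamma>, Match A' Fail, KAlt A m # S) (\<Gamma>, Match A m, S)"
| WhereK: "length ys = length bs \<Longrightarrow> distinct ys
        \<Longrightarrow> set ys \<inter> (hvars \<Gamma> \<union> cvars (Match A (Where m bs)) \<union> \<Union> (kvars ` set S)) = {}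
        \<Longrightarrow> step (\<Gamma>, Match A (Where m bs), S)
                 (\<Gamma>(ys [\<mapsto>] map (\<lambda>b. se (substs ys (map fst bs)) (snd b)) bs),
                  Match A (sm (substs ys (map fst bs)) m), S)"

end

theory Submission
  imports Defs
begin

text \<open>The machine is read backwards.  A configuration is interpreted as a big-step
  derivation for its control, followed by the obligations its return stack still
  carries out on the result; the set \<open>L\<close> of every such judgement is the set of
  variables whose update frames \<open>!y\<close> are pending on the stack.  Every machine step
  reflects this interpretation: whatever the successor configuration can complete,
  its predecessor can complete too, because each transition undoes exactly one
  big-step rule.  The final configuration \<open>(\<Delta>, eval w, [])\<close> completes trivially by
  (Whnf), so the initial one does as well, which for the empty stack is the claim.\<close>

definition upd_vars :: "cont list \<Rightarrow> var set" where
  "upd_vars S = {y. KUpd y \<in> set S}"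

lemma upd_vars_simps [simp]:
  "upd_vars [] = {}"
  "upd_vars (KUpd y # S) = insert y (upd_vars S)"
  "upd_vars (KArg y # S) = upd_vars S"
  "upd_vars (KRet # S) = upd_vars S"
  "upd_vars (KAlt A m # S) = upd_vars S"
  "upd_vars (KPat A c ps m # S) = upd_vars S"
  by (auto simp: upd_vars_def)

lemma upd_vars_subset_kvars: "upd_vars S \<subseteq> \<Union> (kvars ` set S)"
  by (force simp: upd_vars_def)

text \<open>\<open>completes_eval \<Delta>\<^sub>f w\<^sub>f S \<Delta> v\<close>: handing the value \<open>v\<close> with heap \<open>\<Delta>\<close> to the stack
  \<open>S\<close> lets the big-step derivations it still owes end in \<open>\<Delta>\<^sub>f; w\<^sub>f\<close>; likewise
  \<open>completes_match\<close> for a matching result.\<close>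

inductive completes_eval :: "heap \<Rightarrow> expr \<Rightarrow> cont list \<Rightarrow> heap \<Rightarrow> expr \<Rightarrow> bool"
  and completes_match :: "heap \<Rightarrow> expr \<Rightarrow> cont list \<Rightarrow> heap \<Rightarrow> match \<Rightarrow> bool"
  for \<Delta>\<^sub>f :: heap and w\<^sub>f :: expr
where
  Done: "completes_eval \<Delta>\<^sub>f w\<^sub>f [] \<Delta>\<^sub>f w\<^sub>f"
| Arg: "bs_eval \<Delta> (upd_vars S) (Lam (Arg y m)) \<Theta> v \<Longrightarrow> completes_eval \<Delta>\<^sub>f w\<^sub>f S \<Theta> v
        \<Longrightarrow> completes_eval \<Delta>\<^sub>f w\<^sub>f (KArg y # S) \<Delta> (Lam m)"
| Upd: "completes_eval \<Delta>\<^sub>f w\<^sub>f S (\<Delta>(y \<mapsto> w)) w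
        \<Longrightarrow> completes_eval \<Delta>\<^sub>f w\<^sub>f (KUpd y # S) \<Delta> w"
| Pat_match: "length ys = length ps \<Longrightarrow> bs_match \<Delta> (upd_vars S) A (chain ys ps m) \<Theta> r
        \<Longrightarrow> completes_match \<Delta>\<^sub>f w\<^sub>f S \<Theta> r
        \<Longrightarrow> completes_eval \<Delta>\<^sub>f w\<^sub>f (KPat A c ps m # S) \<Delta> (Con c ys)"
| Pat_fail: "c \<noteq> c' \<Longrightarrow> completes_match \<Delta>\<^sub>f w\<^sub>f S \<Delta> Fail
        \<Longrightarrow> completes_eval \<Delta>\<^sub>f w\<^sub>f (KPat A c ps m # S) \<Delta> (Con c' ys)"
| Ret: "bs_eval \<Delta> (upd_vars S) e \<Theta> v \<Longrightarrow> completes_eval \<Delta>\<^sub>f w\<^sub>f S \<Theta> v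
        \<Longrightarrow> completes_match \<Delta>\<^sub>f w\<^sub>f (KRet # S) \<Delta> (Ret e)"
| Alt_ret: "completes_match \<Delta>\<^sub>f w\<^sub>f S \<Delta> (Ret e)
        \<Longrightarrow> completes_match \<Delta>\<^sub>f w\<^sub>f (KAlt A m # S) \<Delta> (Ret e)"
| Alt_fail: "bs_match \<Delta> (upd_vars S) A m \<Theta> r \<Longrightarrow> completes_match \<Delta>\<^sub>f w\<^sub>f S \<Theta> r
        \<Longrightarrow> completes_match \<Delta>\<^sub>f w\<^sub>f (KAlt A m # S) \<Delta> Fail"

inductive_simps completes_eval_Cons_simps:
  "completes_eval \<Delta>\<^sub>f w\<^sub>f (KArg y # S) \<Delta> v"
  "completes_eval \<Delta>\<^sub>f w\<^sub>f (KUpd y # S) \<Delta> v"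
  "completes_eval \<Delta>\<^sub>f w\<^sub>f (KPat A c ps m # S) \<Delta> v"

inductive_simps completes_match_Cons_simps:
  "completes_match \<Delta>\<^sub>f w\<^sub>f (KRet # S) \<Delta> r"
  "completes_match \<Delta>\<^sub>f w\<^sub>f (KAlt A m # S) \<Delta> r"

fun config_completes :: "heap \<Rightarrow> expr \<Rightarrow> config \<Rightarrow> bool" where
  "config_completes \<Delta>\<^sub>f w\<^sub>f (\<Gamma>, Eval e, S) =
     (\<exists>\<Delta> v. bs_eval \<Gamma> (upd_vars S) e \<Delta> v \<and> completes_eval \<Delta>\<^sub>f w\<^sub>f S \<Delta> v)"
| "config_completes \<Delta>\<^sub>f w\<^sub>f (\<Gamma>, Match A m, S) =
     (\<exists>\<Delta> r. bs_match \<Gamma> (upd_vars S) A m \<Delta> r \<and> completes_match \<Delta>\<^sub>f w\<^sub>f S \<Delta> r)"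

lemma bs_eval_whnf_iff: "is_whnf w \<Longrightarrow> bs_eval \<Gamma> L w \<Delta> v \<longleftrightarrow> \<Delta> = \<Gamma> \<and> v = w"
  by (auto elim: bs_eval.cases intro: Whnf)

lemma bs_match_Ret_Nil_iff [simp]: "bs_match \<Gamma> L [] (Ret e) \<Delta> r \<longleftrightarrow> \<Delta> = \<Gamma> \<and> r = Ret e"
  using Return[of \<Gamma> L "[]" e] by (auto elim: bs_match.cases simp: apply_args_def)

lemma bs_match_Fail_iff [simp]: "bs_match \<Gamma> L A Fail \<Delta> r \<longleftrightarrow> \<Delta> = \<Gamma> \<and> r = Fail"
  by (auto elim: bs_match.cases intro: FailR)

lemma step_reflects_config_completes:
  assumes "step c c'" and "config_completes \<Delta>\<^sub>f w\<^sub>f c'"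
  shows "config_completes \<Delta>\<^sub>f w\<^sub>f c"
  using assms(1)
proof (cases rule: step.cases)
  case (WhereK ys bs \<Gamma> A m S)
  then obtain \<Delta> r where
    body: "bs_match (\<Gamma>(ys [\<mapsto>] map (\<lambda>b. se (substs ys (map fst bs)) (snd b)) bs)) (upd_vars S) A
             (sm (substs ys (map fst bs)) m) \<Delta> r"
    and rest: "completes_match \<Delta>\<^sub>f w\<^sub>f S \<Delta> r"
    using assms(2) by auto
  have fresh: "set ys \<inter> (hvars \<Gamma> \<union> upd_vars S \<union> set A \<union> av_m (Where m bs)) = {}"
    using WhereK(5) upd_vars_subset_kvars[of S] by auto
  from WhereK(3,4) fresh body have "bs_match \<Gamma> (upd_vars S) A (Where m bs) \<Delta> r"
    by (rule WhereR)
  with WhereK(1) rest show ?thesis by auto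
  \<comment> \<open>Each remaining transition is undone by the big-step rule of the same name,
    with (Whnf) supplying the evaluation of the value the machine has reached.\<close>
qed (use assms(2) in \<open>auto simp: bs_eval_whnf_iff completes_eval_Cons_simps completes_match_Cons_simps
  intro: bs_eval_bs_match.intros completes_eval_completes_match.intros\<close>)

lemma steps_reflect_config_completes:
  "step\<^sup>*\<^sup>* c c' \<Longrightarrow> config_completes \<Delta>\<^sub>f w\<^sub>f c' \<Longrightarrow> config_completes \<Delta>\<^sub>f w\<^sub>f c"
  by (induction rule: converse_rtranclp_induct) (auto intro: step_reflects_config_completes)

theorem corollary4p6:
  assumes "finite (dom \<Gamma>)"
    and "step\<^sup>*\<^sup>* (\<Gamma>, Eval e, []) (\<Delta>, Eval w, [])"
    and "is_whnf w"
  shows "bs_eval \<Gamma> {} e \<Delta> w"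
proof -
  have "config_completes \<Delta> w (\<Delta>, Eval w, [])"
    using assms(3) by (auto intro: Whnf completes_eval_completes_match.Done)
  with assms(2) have "config_completes \<Delta> w (\<Gamma>, Eval e, [])"
    by (rule steps_reflect_config_completes)
  then show ?thesis
    by (auto elim: completes_eval.cases)
qed

end
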